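(* Let $(X,\|\cdot,\cdot\|)$ be a $2$-normed space, $E\subseteq X$, and $f:E\to X$. If $f$ is statistically ward continuous on $E$, then $f$ is statistically sequentially continuous on $E$; that is, for every $x_0\in E$ and every sequence $(x_k)$ of points of $E$ statistically converging to $x_0$, the sequence $(f(x_k))$ statistically converges to $f(x_0)$.
   Context: A $2$-normed space is a real linear space $X$ with $\dim X>1$ together with a function $\|\cdot,\cdot\|:X^2\to\mathbb{R}$ such that for all $x,y,z\in X$, $\alpha\in\mathbb{R}$: (1) $\|x,y\|=0$ iff $x,y$ are linearly dependent; (2) $\|x,y\|=\|y,x\|$; (3) $\|\alpha x,y\|=|\alpha|\|x,y\|$; (4) $\|x,y+z\|\le\|x,y\|+\|x,z\|$. A sequence $(x_k)$ in $X$ statistically converges to $L\in X$ if for every $\epsilon>0$ and every $z\in X$, $\lim_{n\to\infty}\frac1n|\{k\le n:\|x_k-L,z\|\ge\epsilon\}|=0$. For a sequence $(x_k)$ write $\Delta x_k=x_{k+1}-x_k$. A sequence $(x_k)$ in $X$ is statistically quasi-Cauchy if for every $\epsilon>0$ and every $z\in X$, $\lim_{n\to\infty}\frac1n|\{k\le n:\|\Delta x_k,z\|\ge\epsilon\}|=0$. A function $f:E\to X$ is statistically ward continuous on $E$ if $(f(x_k))$ is statistically quasi-Cauchy whenever $(x_k)$ is a statistically quasi-Cauchy sequence of points of $E$. *)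

theory Defs
  imports "HOL-Analysis.Analysis"
begin

definition lin_dep2 :: "'a::real_vector \<Rightarrow> 'a \<Rightarrow> bool" where
  "lin_dep2 x y \<longleftrightarrow> (\<exists>a b::real. (a \<noteq> 0 \<or> b \<noteq> 0) \<and> a *\<^sub>R x + b *\<^sub>R y = 0)"

definition two_norm :: "('a::real_vector \<Rightarrow> 'a \<Rightarrow> real) \<Rightarrow> bool" where
  "two_norm N \<longleftrightarrow>
     (\<exists>x y::'a. \<not> lin_dep2 x y) \<and>
     (\<forall>x y. N x y = 0 \<longleftrightarrow> lin_dep2 x y) \<and>
     (\<forall>x y. N x y = N y x) \<and>
     (\<forall>(\<alpha>::real) x y. N (\<alpha> *\<^sub>R x) y = \<bar>\<alpha>\<bar> * N x y) \<and>
     (\<forall>x y z. N x (y + z) \<le> N x y + N x z)"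

definition stat_conv :: "('a::real_vector \<Rightarrow> 'a \<Rightarrow> real) \<Rightarrow> (nat \<Rightarrow> 'a) \<Rightarrow> 'a \<Rightarrow> bool" where
  "stat_conv N x L \<longleftrightarrow> (\<forall>\<epsilon>>0. \<forall>z.
     (\<lambda>n. real (card {k\<in>{1..n}. N (x k - L) z \<ge> \<epsilon>}) / real n) \<longlonglongrightarrow> 0)"

definition stat_quasi_cauchy :: "('a::real_vector \<Rightarrow> 'a \<Rightarrow> real) \<Rightarrow> (nat \<Rightarrow> 'a) \<Rightarrow> bool" where
  "stat_quasi_cauchy N x \<longleftrightarrow> (\<forall>\<epsilon>>0. \<forall>z.
     (\<lambda>n. real (card {k\<in>{1..n}. N (x (Suc k) - x k) z \<ge> \<epsilon>}) / real n) \<longlonglongrightarrow> 0)"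

definition stat_ward_cont :: "('a::real_vector \<Rightarrow> 'a \<Rightarrow> real) \<Rightarrow> 'a set \<Rightarrow> ('a \<Rightarrow> 'a) \<Rightarrow> bool" where
  "stat_ward_cont N E f \<longleftrightarrow> (\<forall>x. (\<forall>k. x k \<in> E) \<longrightarrow> stat_quasi_cauchy N x \<longrightarrow>
      stat_quasi_cauchy N (\<lambda>k. f (x k)))"

end

theory Submission
  imports Defs
begin

text \<open>
  Proof idea (Cakalli-style "interleaving" argument).  Let x be a sequence in E
  statistically converging to x0 \<in> E.  Interleave it with the constant sequence
  x0, i.e. y = (x 0, x0, x 1, x0, x 2, x0, ...).  Every difference y (j+1) - y j
  equals, up to sign, x i - x0 for i = (j+1) div 2, so the statistical
  convergence of x makes y statistically quasi-Cauchy.  Ward continuity then makes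
  f \<circ> y statistically quasi-Cauchy, and the differences of f \<circ> y at the even
  indices 2k are, up to sign, f (x k) - f x0; hence f \<circ> x statistically converges
  to f x0.
\<close>

definition density_zero :: "(nat \<Rightarrow> bool) \<Rightarrow> bool" where
  "density_zero P \<longleftrightarrow> (\<lambda>n. real (card {k\<in>{1..n}. P k}) / real n) \<longlonglongrightarrow> 0"

lemma stat_conv_iff_density_zero:
  "stat_conv N x L \<longleftrightarrow> (\<forall>\<epsilon>>0. \<forall>z. density_zero (\<lambda>k. N (x k - L) z \<ge> \<epsilon>))"
  unfolding stat_conv_def density_zero_def ..

lemma stat_quasi_cauchy_iff_density_zero:
  "stat_quasi_cauchy N x \<longleftrightarrow> (\<forall>\<epsilon>>0. \<forall>z. density_zero (\<lambda>k. N (x (Suc k) - x k) z \<ge> \<epsilon>))"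
  unfolding stat_quasi_cauchy_def density_zero_def ..

text \<open>Pulling back along j \<mapsto> (j+1) div 2 at most doubles the counts, since every
  index k has the two preimages 2k - 1 and 2k.\<close>
lemma density_zero_half_index:
  assumes "density_zero P"
  shows "density_zero (\<lambda>j. P (Suc j div 2))"
  unfolding density_zero_def
proof (rule Lim_null_comparison)
  let ?B = "\<lambda>n. {k\<in>{1..n}. P k}"
  have "(\<lambda>n. 2 * (real (card (?B n)) / real n)) \<longlonglongrightarrow> 2 * 0"
    using assms unfolding density_zero_def by (intro tendsto_mult tendsto_const)
  then show "(\<lambda>n. 2 * (real (card (?B n)) / real n)) \<longlonglongrightarrow> 0" by simp
  show "\<forall>\<^sub>F n in sequentially.
          norm (real (card {j\<in>{1..n}. P (Suc j div 2)}) / real n)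
            \<le> 2 * (real (card (?B n)) / real n)"
  proof (intro always_eventually allI)
    fix n
    let ?A = "{j\<in>{1..n}. P (Suc j div 2)}"
    have "?A \<subseteq> (\<lambda>k. 2*k) ` ?B n \<union> (\<lambda>k. 2*k - 1) ` ?B n"
    proof
      fix j assume j: "j \<in> ?A"
      define k where "k = Suc j div 2"
      have "k \<in> ?B n" using j by (auto simp: k_def)
      moreover have "j = 2*k \<or> j = 2*k - 1" unfolding k_def by presburger
      ultimately show "j \<in> (\<lambda>k. 2*k) ` ?B n \<union> (\<lambda>k. 2*k - 1) ` ?B n" by blast
    qed
    then have "card ?A \<le> card ((\<lambda>k. 2*k) ` ?B n \<union> (\<lambda>k. 2*k - 1) ` ?B n)"
      by (intro card_mono) auto
    also have "\<dots> \<le> card ((\<lambda>k. 2*k) ` ?B n) + card ((\<lambda>k. 2*k - 1) ` ?B n)"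
      by (rule card_Un_le)
    also have "\<dots> \<le> 2 * card (?B n)"
      using card_image_le[of "?B n" "\<lambda>k. 2*k"] card_image_le[of "?B n" "\<lambda>k. 2*k - 1"] by simp
    finally have "real (card ?A) \<le> 2 * real (card (?B n))" by linarith
    then show "norm (real (card ?A) / real n) \<le> 2 * (real (card (?B n)) / real n)"
      by (simp add: divide_right_mono)
  qed
qed

text \<open>Restricting to even indices: k \<mapsto> 2k embeds the bad indices up to n into the
  bad indices up to 2n, so the density is at most twice the density at 2n.\<close>
lemma density_zero_even_index:
  assumes "density_zero Q"
  shows "density_zero (\<lambda>k. Q (2*k))"
  unfolding density_zero_def
proof (rule Lim_null_comparison)
  let ?D = "\<lambda>n. {j\<in>{1..n}. Q j}"
  have "(\<lambda>n. real (card (?D (2*n))) / real (2*n)) \<longlonglongrightarrow> 0"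
    using LIMSEQ_subseq_LIMSEQ[OF assms[unfolded density_zero_def], of "\<lambda>n. 2*n"]
    by (simp add: strict_mono_def o_def)
  from tendsto_mult[OF tendsto_const[of 2] this]
  show "(\<lambda>n. 2 * (real (card (?D (2*n))) / real (2*n))) \<longlonglongrightarrow> 0" by simp
  show "\<forall>\<^sub>F n in sequentially.
          norm (real (card {k\<in>{1..n}. Q (2*k)}) / real n)
            \<le> 2 * (real (card (?D (2*n))) / real (2*n))"
  proof (intro always_eventually allI)
    fix n
    let ?C = "{k\<in>{1..n}. Q (2*k)}"
    have "card ?C = card ((\<lambda>k. 2*k) ` ?C)"
      by (rule card_image[symmetric]) (auto simp: inj_on_def)
    also have "\<dots> \<le> card (?D (2*n))"
      by (intro card_mono) auto
    finally have "real (card ?C) \<le> real (card (?D (2*n)))" by simp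
    then show "norm (real (card ?C) / real n) \<le> 2 * (real (card (?D (2*n))) / real (2*n))"
      by (cases "n = 0") (simp_all add: divide_right_mono)
  qed
qed

lemma two_norm_uminus:
  assumes "two_norm N"
  shows "N (- v) z = N v z"
proof -
  have "N ((-1::real) *\<^sub>R v) z = \<bar>-1::real\<bar> * N v z"
    using assms unfolding two_norm_def by blast
  then show ?thesis by simp
qed

definition interleave :: "(nat \<Rightarrow> 'a) \<Rightarrow> 'a \<Rightarrow> nat \<Rightarrow> 'a" where
  "interleave x c j = (if even j then x (j div 2) else c)"

text \<open>After applying any map g, each difference of the interleaved sequence is
  \<open>\<plusminus>\<close>(g (x i) - g c) with i = (j+1) div 2, so it has the same 2-norm.\<close>
lemma interleave_step:
  assumes "two_norm N"
  shows "N (g (interleave x c (Suc j)) - g (interleave x c j)) z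
           = N (g (x (Suc j div 2)) - g c) z"
proof (cases "even j")
  case True
  then have "g (interleave x c (Suc j)) - g (interleave x c j) = - (g (x (Suc j div 2)) - g c)"
    by (simp add: interleave_def)
  then show ?thesis using two_norm_uminus[OF assms] by metis
qed (simp add: interleave_def)

lemma interleave_stat_quasi_cauchy:
  assumes "two_norm N" and "stat_conv N x c"
  shows "stat_quasi_cauchy N (interleave x c)"
  unfolding stat_quasi_cauchy_iff_density_zero
proof (intro allI impI)
  fix \<epsilon> :: real and z assume "\<epsilon> > 0"
  then have "density_zero (\<lambda>i. N (x i - c) z \<ge> \<epsilon>)"
    using assms(2) unfolding stat_conv_iff_density_zero by blast
  from density_zero_half_index[OF this]
  show "density_zero (\<lambda>j. N (interleave x c (Suc j) - interleave x c j) z \<ge> \<epsilon>)"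
    using interleave_step[OF assms(1), where g = id] by simp
qed

lemma stat_conv_from_interleave:
  assumes "two_norm N" and "stat_quasi_cauchy N (\<lambda>j. g (interleave x c j))"
  shows "stat_conv N (\<lambda>k. g (x k)) (g c)"
  unfolding stat_conv_iff_density_zero
proof (intro allI impI)
  fix \<epsilon> :: real and z assume "\<epsilon> > 0"
  then have "density_zero
      (\<lambda>j. N (g (interleave x c (Suc j)) - g (interleave x c j)) z \<ge> \<epsilon>)"
    using assms(2) unfolding stat_quasi_cauchy_iff_density_zero by blast
  from density_zero_even_index[OF this]
  show "density_zero (\<lambda>k. N (g (x k) - g c) z \<ge> \<epsilon>)"
    using interleave_step[OF assms(1), where g = g] by simp
qed

theorem theorem3p3:
  fixes N :: "'a::real_vector \<Rightarrow> 'a \<Rightarrow> real" and E :: "'a set" and f :: "'a \<Rightarrow> 'a"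
  assumes "two_norm N"
    and "stat_ward_cont N E f"
  shows "\<forall>x0\<in>E. \<forall>x. (\<forall>k. x k \<in> E) \<longrightarrow> stat_conv N x x0 \<longrightarrow> stat_conv N (\<lambda>k. f (x k)) (f x0)"
proof (intro ballI allI impI)
  fix x0 x assume x0: "x0 \<in> E" and xE: "\<forall>k. x k \<in> E" and conv: "stat_conv N x x0"
  have "\<forall>j. interleave x x0 j \<in> E" using x0 xE by (simp add: interleave_def)
  moreover have "stat_quasi_cauchy N (interleave x x0)"
    using interleave_stat_quasi_cauchy[OF assms(1) conv] .
  ultimately have "stat_quasi_cauchy N (\<lambda>j. f (interleave x x0 j))"
    using assms(2) unfolding stat_ward_cont_def by blast
  then show "stat_conv N (\<lambda>k. f (x k)) (f x0)"
    by (rule stat_conv_from_interleave[OF assms(1)])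
qed

end
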